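(* Let $T>0$, $\alpha>0$ and $\hat\beta<0$ be constants, and let $\hat\varphi:\mathbb{R}\to\mathbb{R}$ be a continuous $T$-periodic function with $\int_0^T\hat\varphi(s)\,ds=0$. Assume $$\frac{1}{T}\int_0^T\Big(\int_0^\tau\hat\varphi(s)\,ds\Big)^2d\tau>\Big(\frac{1}{T}\int_0^T\tau\,\hat\varphi(\tau)\,d\tau\Big)^2-\hat\beta .$$ Then there exists a number $\mu_0>0$ such that for every $\mu\in(0,\mu_0]$ the zero solution of the linear equation $$y''+\alpha\mu y'+(\hat\beta\mu^2+\mu\hat\varphi(t))\,y=0$$ is asymptotically stable.
   Context: Asymptotic stability is meant in the Lyapunov sense for the equivalent first-order system in $(y,y')$. *)

theory Defs
  imports "HOL-Analysis.Analysis"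
begin

text \<open>Solutions on [t0, infinity) of the first-order system equivalent to
  y'' + a y' + q(t) y = 0, in the variables (y, v) with v = y'.\<close>
definition lin2_solution ::
  "real \<Rightarrow> (real \<Rightarrow> real) \<Rightarrow> real \<Rightarrow> (real \<Rightarrow> real) \<Rightarrow> (real \<Rightarrow> real) \<Rightarrow> bool" where
  "lin2_solution a q t0 y v \<longleftrightarrow>
     (\<forall>t\<ge>t0. (y has_real_derivative v t) (at t within {t0..}) \<and>
              (v has_real_derivative (- a * v t - q t * y t)) (at t within {t0..}))"

definition zero_asympt_stable :: "real \<Rightarrow> (real \<Rightarrow> real) \<Rightarrow> bool" where
  "zero_asympt_stable a q \<longleftrightarrow>
     (\<forall>t0. \<forall>\<epsilon>>0. \<exists>\<delta>>0. \<forall>y v. lin2_solution a q t0 y v \<and> norm (y t0, v t0) < \<delta>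
          \<longrightarrow> (\<forall>t\<ge>t0. norm (y t, v t) < \<epsilon>)) \<and>
     (\<forall>t0. \<exists>\<delta>>0. \<forall>y v. lin2_solution a q t0 y v \<and> norm (y t0, v t0) < \<delta>
          \<longrightarrow> ((\<lambda>t. (y t, v t)) \<longlongrightarrow> 0) at_top)"

end

theory Submission
  imports Defs "HOL-Real_Asymp.Real_Asymp"
begin

text \<open>Let \<open>\<Psi>\<close> be the zero-mean periodic primitive of \<open>\<phi>\<close>. The substitution
  \<open>v = \<mu> (u - \<Psi> y)\<close> turns the equation into the slow system
  \<open>y' = \<mu> (u - \<Psi> y)\<close>, \<open>u' = \<mu> ((\<Psi> - \<alpha>) u + (\<alpha> \<Psi> - \<beta> - \<Psi>\<^sup>2) y)\<close>, whose average over a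
  period is the damped oscillator \<open>y' = \<mu> u\<close>, \<open>u' = - \<mu> (\<alpha> u + k y)\<close> with
  \<open>k = \<beta> + mean(\<Psi>\<^sup>2)\<close>. Integration by parts expresses \<open>mean(\<Psi>\<^sup>2)\<close> through the two
  integrals of the hypothesis, which therefore says exactly \<open>k > 0\<close>. A positive definite
  quadratic Lyapunov form of the averaged system, corrected by \<open>\<mu>\<close> times a quadratic form
  with periodic coefficients that absorbs the oscillating part of its derivative, decreases
  at rate at least \<open>\<mu> \<epsilon> - O(\<mu>\<^sup>2)\<close>; for small \<open>\<mu>\<close> every solution therefore decays
  exponentially, uniformly in the initial time.\<close>

section \<open>Periodic functions\<close>

lemma periodic_shift_nat:
  fixes f :: "real \<Rightarrow> 'a"
  assumes "\<forall>t. f (t + T) = f t"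
  shows "f (x + real n * T) = f x"
proof (induction n)
  case (Suc n)
  have "f (x + real (Suc n) * T) = f ((x + real n * T) + T)" by (simp add: algebra_simps)
  then show ?case using assms Suc by simp
qed simp

lemma periodic_shift_int:
  fixes f :: "real \<Rightarrow> 'a"
  assumes "\<forall>t. f (t + T) = f t"
  shows "f (x + of_int n * T) = f x"
proof (cases "n \<ge> 0")
  case True
  then show ?thesis using periodic_shift_nat[OF assms, of x "nat n"] by simp
next
  case False
  then show ?thesis using periodic_shift_nat[OF assms, of "x + of_int n * T" "nat (- n)"] by simp
qed

lemma continuous_periodic_bounded:
  fixes f :: "real \<Rightarrow> real"
  assumes "T > 0" and "continuous_on UNIV f" and "\<forall>t. f (t + T) = f t"
  obtains M where "\<And>t. \<bar>f t\<bar> \<le> M"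
proof -
  have "bounded (f ` {0..T})"
    by (intro compact_imp_bounded compact_continuous_image continuous_on_subset[OF assms(2)]) auto
  then obtain M where M: "\<forall>x\<in>{0..T}. \<bar>f x\<bar> \<le> M"
    by (auto simp: bounded_iff)
  have "\<bar>f t\<bar> \<le> M" for t
  proof -
    define n where "n = \<lfloor>t / T\<rfloor>"
    have "of_int n \<le> t / T" "t / T < of_int n + 1"
      unfolding n_def by linarith+
    then have "t - of_int n * T \<in> {0..T}"
      using assms(1) by (auto simp: field_simps)
    moreover have "f (t - of_int n * T + of_int n * T) = f (t - of_int n * T)"
      by (rule periodic_shift_int[OF assms(3)])
    ultimately show ?thesis using M by fastforce
  qed
  then show thesis by (rule that)
qed

lemma has_integral_of_has_real_derivative:
  fixes F f :: "real \<Rightarrow> real"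
  assumes "a \<le> b" and "\<And>x. (F has_real_derivative f x) (at x)"
  shows "(f has_integral (F b - F a)) {a..b}"
  using assms by (intro fundamental_theorem_of_calculus)
    (auto simp: has_real_derivative_iff_has_vector_derivative[symmetric] intro: has_field_derivative_at_within)

lemma periodic_antiderivative:
  fixes f :: "real \<Rightarrow> real"
  assumes "T > 0" and "continuous_on UNIV f" and "\<forall>t. f (t + T) = f t"
    and "integral {0..T} f = 0"
  obtains F where "\<And>x. (F has_real_derivative f x) (at x)" and "\<forall>t. F (t + T) = F t" and "F 0 = 0"
proof -
  have "\<exists>F. \<forall>x::real. -\<infinity> < ereal x \<longrightarrow> ereal x < \<infinity> \<longrightarrow> (F has_vector_derivative f x) (at x)"
    using assms(2) by (intro einterval_antiderivative) (auto simp: continuous_on_eq_continuous_at)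
  then obtain F0 where F0: "\<And>x. (F0 has_real_derivative f x) (at x)"
    by (auto simp: has_real_derivative_iff_has_vector_derivative)
  define F where "F t = F0 t - F0 0" for t
  have F: "(F has_real_derivative f x) (at x)" for x
    unfolding F_def using F0 by (auto intro!: derivative_eq_intros)
  have "(f has_integral (F T - F 0)) {0..T}"
    using has_integral_of_has_real_derivative[of 0 T F f] F assms(1) by simp
  then have FT: "F T = F 0"
    using assms(4) by (simp add: integral_unique)
  have "((\<lambda>t. F (t + T)) has_real_derivative f x) (at x)" for x
    using DERIV_shift[THEN iffD1, OF F, of T x] assms(3) by simp
  then have "\<forall>x. ((\<lambda>t. F (t + T) - F t) has_real_derivative 0) (at x)"
    using DERIV_diff[OF _ F] by fastforce
  then have "F (t + T) - F t = F (0 + T) - F 0" for t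
    by (rule DERIV_isconst_all)
  then have "\<forall>t. F (t + T) = F t" using FT by simp
  moreover have "F 0 = 0" unfolding F_def by simp
  ultimately show thesis using that F by blast
qed

section \<open>Exponential decay and stability\<close>

lemma exp_decay_of_derivative_le:
  fixes W W' :: "real \<Rightarrow> real"
  assumes W': "\<And>x. x \<ge> t0 \<Longrightarrow> (W has_real_derivative W' x) (at x within {t0..})"
    and le: "\<And>x. x \<ge> t0 \<Longrightarrow> W' x \<le> - \<gamma> * W x" and "t \<ge> t0"
  shows "W t \<le> W t0 * exp (- \<gamma> * (t - t0))"
proof -
  define h where "h x = W x * exp (\<gamma> * (x - t0))" for x
  have "continuous_on {t0..} W"
    unfolding continuous_on_eq_continuous_within using DERIV_continuous[OF W'] by simp
  then have "continuous_on {t0..t} h"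
    unfolding h_def using continuous_on_subset[of "{t0..}" W "{t0..t}"] by (auto intro!: continuous_intros)
  then have "h t \<le> h t0"
  proof (rule DERIV_nonpos_imp_decreasing_open[OF \<open>t \<ge> t0\<close>, rotated])
    fix x assume x: "t0 < x" "x < t"
    have "(W has_real_derivative W' x) (at x within {t0<..})"
      using x by (intro DERIV_subset[OF W'[of x]]) auto
    then have "(W has_real_derivative W' x) (at x)"
      using x at_within_open[of x "{t0<..}"] by simp
    then have "(h has_real_derivative W' x * exp (\<gamma> * (x - t0)) + W x * (exp (\<gamma> * (x - t0)) * (\<gamma> * 1))) (at x)"
      unfolding h_def by (auto intro!: derivative_eq_intros)
    moreover have "W' x * exp (\<gamma> * (x - t0)) + W x * (exp (\<gamma> * (x - t0)) * (\<gamma> * 1))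
        = (W' x + \<gamma> * W x) * exp (\<gamma> * (x - t0))"
      by (simp add: algebra_simps)
    moreover have "(W' x + \<gamma> * W x) * exp (\<gamma> * (x - t0)) \<le> 0"
      using le[of x] x by (intro mult_nonpos_nonneg) auto
    ultimately show "\<exists>y. (h has_real_derivative y) (at x) \<and> y \<le> 0" by auto
  qed
  then have "W t * exp (\<gamma> * (t - t0)) \<le> W t0" unfolding h_def by simp
  have "W t = W t * exp (\<gamma> * (t - t0)) * exp (- \<gamma> * (t - t0))"
    by (simp add: mult.assoc flip: exp_add)
  also have "\<dots> \<le> W t0 * exp (- \<gamma> * (t - t0))"
    using \<open>W t * exp (\<gamma> * (t - t0)) \<le> W t0\<close> by (rule mult_right_mono) simp
  finally show ?thesis .
qed

lemma exp_decay_of_lyapunov: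
  fixes V V' N :: "real \<Rightarrow> real"
  assumes "\<And>x. x \<ge> t0 \<Longrightarrow> (V has_real_derivative V' x) (at x within {t0..})"
    and "\<And>x. x \<ge> t0 \<Longrightarrow> V' x \<le> - c * N x"
    and "\<And>x. a * N x \<le> V x" and "\<And>x. V x \<le> b * N x"
    and "a > 0" and "b > 0" and "c \<ge> 0" and "t \<ge> t0"
  shows "N t \<le> (b / a) * N t0 * exp (- (c / b) * (t - t0))"
proof -
  have rate: "V' x \<le> - (c / b) * V x" if "x \<ge> t0" for x
  proof -
    have "(c / b) * V x \<le> (c / b) * (b * N x)"
      using assms(4,6,7) by (intro mult_left_mono) auto
    then show ?thesis using assms(2)[OF that] assms(6) by simp
  qed
  have "V t \<le> V t0 * exp (- (c / b) * (t - t0))"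
    using assms(1) rate assms(8) by (rule exp_decay_of_derivative_le)
  also have "\<dots> \<le> b * N t0 * exp (- (c / b) * (t - t0))"
    using assms(4) by (intro mult_right_mono) auto
  finally have "a * N t \<le> b * N t0 * exp (- (c / b) * (t - t0))"
    using assms(3)[of t] by linarith
  then show ?thesis using assms(5) by (simp add: field_simps)
qed

lemma zero_asympt_stable_of_exp_bound:
  assumes "K > 0" and "\<gamma> > 0"
    and bound: "\<And>t0 y v t. lin2_solution a q t0 y v \<Longrightarrow> t \<ge> t0 \<Longrightarrow>
      (y t)\<^sup>2 + (v t)\<^sup>2 \<le> K * ((y t0)\<^sup>2 + (v t0)\<^sup>2) * exp (- \<gamma> * (t - t0))"
  shows "zero_asympt_stable a q"
  unfolding zero_asympt_stable_def
proof (intro conjI allI impI)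
  have norm_sq: "(norm (x, z))\<^sup>2 = x\<^sup>2 + z\<^sup>2" for x z :: real
    by (simp add: norm_Pair)
  fix t0 \<epsilon> :: real assume "\<epsilon> > 0"
  define \<delta> where "\<delta> = \<epsilon> / sqrt (K + 1)"
  have "\<delta> > 0" "K * \<delta>\<^sup>2 < \<epsilon>\<^sup>2"
    unfolding \<delta>_def using \<open>K > 0\<close> \<open>\<epsilon> > 0\<close> by (simp_all add: power_divide field_simps)
  show "\<exists>\<delta>>0. \<forall>y v. lin2_solution a q t0 y v \<and> norm (y t0, v t0) < \<delta> \<longrightarrow>
      (\<forall>t\<ge>t0. norm (y t, v t) < \<epsilon>)"
  proof (intro exI[of _ \<delta>] conjI allI impI \<open>\<delta> > 0\<close>)
    fix y v t assume sol: "lin2_solution a q t0 y v \<and> norm (y t0, v t0) < \<delta>" and "t0 \<le> t"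
    have "(y t0)\<^sup>2 + (v t0)\<^sup>2 < \<delta>\<^sup>2"
      using sol power_strict_mono[of "norm (y t0, v t0)" \<delta> 2] norm_sq by auto
    have "(norm (y t, v t))\<^sup>2 \<le> K * ((y t0)\<^sup>2 + (v t0)\<^sup>2) * exp (- \<gamma> * (t - t0))"
      using bound sol \<open>t0 \<le> t\<close> norm_sq by simp
    also have "\<dots> \<le> K * ((y t0)\<^sup>2 + (v t0)\<^sup>2)"
      using \<open>K > 0\<close> \<open>\<gamma> > 0\<close> \<open>t0 \<le> t\<close> by (intro mult_left_le) auto
    also have "\<dots> \<le> K * \<delta>\<^sup>2"
      using \<open>(y t0)\<^sup>2 + (v t0)\<^sup>2 < \<delta>\<^sup>2\<close> \<open>K > 0\<close> by simp
    also have "\<dots> < \<epsilon>\<^sup>2" by fact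
    finally show "norm (y t, v t) < \<epsilon>"
      using \<open>\<epsilon> > 0\<close> by (simp add: power_less_imp_less_base)
  qed
next
  fix t0 :: real
  show "\<exists>\<delta>>0. \<forall>y v. lin2_solution a q t0 y v \<and> norm (y t0, v t0) < \<delta> \<longrightarrow>
      ((\<lambda>t. (y t, v t)) \<longlongrightarrow> 0) at_top"
  proof (intro exI[of _ 1] conjI allI impI)
    fix y v assume sol: "lin2_solution a q t0 y v \<and> norm (y t0, v t0) < 1"
    define C where "C = K * ((y t0)\<^sup>2 + (v t0)\<^sup>2)"
    have "eventually (\<lambda>t. norm (y t, v t) \<le> sqrt (C * exp (- \<gamma> * (t - t0)))) at_top"
      using eventually_ge_at_top[of t0]
    proof eventually_elim
      case (elim t)
      then show ?case
        using bound[of t0 y v t] sol unfolding C_def by (simp add: norm_Pair)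
    qed
    moreover have "((\<lambda>t. exp (- \<gamma> * (t - t0))) \<longlongrightarrow> 0) at_top"
      using \<open>\<gamma> > 0\<close> by real_asymp
    then have "((\<lambda>t. sqrt (C * exp (- \<gamma> * (t - t0)))) \<longlongrightarrow> sqrt (C * 0)) at_top"
      by (intro tendsto_intros)
    ultimately show "((\<lambda>t. (y t, v t)) \<longlongrightarrow> 0) at_top"
      by (simp add: Lim_null_comparison)
  qed simp
qed

section \<open>Quadratic forms\<close>

lemma abs_mult_le_half_sum_squares:
  fixes y u :: real
  shows "\<bar>y * u\<bar> \<le> (y\<^sup>2 + u\<^sup>2) / 2"
proof -
  have "0 \<le> (\<bar>y\<bar> - \<bar>u\<bar>)\<^sup>2" by simp
  then show ?thesis by (simp add: power2_eq_square algebra_simps abs_mult)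
qed

lemma quadratic_form_nonneg:
  fixes a b d y u :: real
  assumes "a \<ge> 0" and "d \<ge> 0" and "b\<^sup>2 \<le> 4 * a * d"
  shows "a * y\<^sup>2 + b * y * u + d * u\<^sup>2 \<ge> 0"
proof (cases "a = 0")
  case True
  then show ?thesis using assms by simp
next
  case False
  have "4 * a * (a * y\<^sup>2 + b * y * u + d * u\<^sup>2) = (2 * a * y + b * u)\<^sup>2 + (4 * a * d - b\<^sup>2) * u\<^sup>2"
    by (simp add: algebra_simps power2_eq_square)
  also have "\<dots> \<ge> 0" using assms(3) by simp
  finally show ?thesis using False assms(1) by (simp add: zero_le_mult_iff)
qed

lemma quadratic_form_coercive:
  fixes a b d :: real
  assumes "a > 0" and "d > 0" and "b\<^sup>2 < 4 * a * d"
  obtains \<epsilon> where "\<epsilon> > 0" and "\<And>y u. \<epsilon> * (y\<^sup>2 + u\<^sup>2) \<le> a * y\<^sup>2 + b * y * u + d * u\<^sup>2"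
proof
  define \<epsilon> where "\<epsilon> = (a * d - b\<^sup>2 / 4) / (a + d)"
  show "\<epsilon> > 0" unfolding \<epsilon>_def using assms by simp
  have "\<epsilon> \<le> a * d / (a + d)"
    unfolding \<epsilon>_def using assms by (intro divide_right_mono) auto
  moreover have "a * d / (a + d) \<le> a" "a * d / (a + d) \<le> d"
    using assms by (simp_all add: field_simps)
  ultimately have "\<epsilon> \<le> a" "\<epsilon> \<le> d" by linarith+
  moreover have "b\<^sup>2 \<le> 4 * (a - \<epsilon>) * (d - \<epsilon>)"
  proof -
    have "\<epsilon> * (a + d) = a * d - b\<^sup>2 / 4" unfolding \<epsilon>_def using assms by simp
    moreover have "4 * (a - \<epsilon>) * (d - \<epsilon>) = 4 * (a * d) - 4 * (\<epsilon> * (a + d)) + 4 * \<epsilon>\<^sup>2"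
      by (simp add: algebra_simps power2_eq_square)
    ultimately show ?thesis using zero_le_power2[of \<epsilon>] by linarith
  qed
  ultimately have nonneg: "(a - \<epsilon>) * y\<^sup>2 + b * y * u + (d - \<epsilon>) * u\<^sup>2 \<ge> 0" for y u
    by (intro quadratic_form_nonneg) auto
  then show "\<epsilon> * (y\<^sup>2 + u\<^sup>2) \<le> a * y\<^sup>2 + b * y * u + d * u\<^sup>2" for y u
    using nonneg[of y u] unfolding left_diff_distrib distrib_left by linarith
qed

lemma abs_quadratic_form_le:
  fixes a b d y u :: real
  assumes "\<bar>a\<bar> \<le> M" and "\<bar>b\<bar> \<le> M" and "\<bar>d\<bar> \<le> M"
  shows "\<bar>a * y\<^sup>2 + 2 * b * y * u + d * u\<^sup>2\<bar> \<le> 2 * M * (y\<^sup>2 + u\<^sup>2)"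
proof -
  have "\<bar>a * y\<^sup>2\<bar> \<le> M * y\<^sup>2" "\<bar>d * u\<^sup>2\<bar> \<le> M * u\<^sup>2"
    using assms by (simp_all add: abs_mult mult_right_mono)
  moreover have "\<bar>2 * b * y * u\<bar> \<le> M * (y\<^sup>2 + u\<^sup>2)"
  proof -
    have "\<bar>2 * b * y * u\<bar> = \<bar>b\<bar> * (2 * \<bar>y * u\<bar>)" by (simp add: abs_mult)
    also have "\<dots> \<le> M * (y\<^sup>2 + u\<^sup>2)"
      using abs_mult_le_half_sum_squares[of y u] assms(2) by (intro mult_mono) auto
    finally show ?thesis .
  qed
  ultimately show ?thesis by (simp add: abs_le_iff algebra_simps)
qed

lemma abs_product_linear_forms_le:
  fixes a1 a2 b1 b2 y u :: real
  assumes "\<bar>a1\<bar> \<le> M" and "\<bar>a2\<bar> \<le> M" and "\<bar>b1\<bar> \<le> M" and "\<bar>b2\<bar> \<le> M"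
  shows "\<bar>(a1 * y + a2 * u) * (b1 * y + b2 * u)\<bar> \<le> 2 * M\<^sup>2 * (y\<^sup>2 + u\<^sup>2)"
proof -
  have linear: "\<bar>c1 * y + c2 * u\<bar> \<le> M * (\<bar>y\<bar> + \<bar>u\<bar>)" if "\<bar>c1\<bar> \<le> M" "\<bar>c2\<bar> \<le> M" for c1 c2
    using abs_triangle_ineq[of "c1 * y" "c2 * u"] mult_right_mono[OF that(1), of "\<bar>y\<bar>"]
      mult_right_mono[OF that(2), of "\<bar>u\<bar>"]
    by (simp add: abs_mult distrib_left)
  have "\<bar>(a1 * y + a2 * u) * (b1 * y + b2 * u)\<bar> \<le> (M * (\<bar>y\<bar> + \<bar>u\<bar>)) * (M * (\<bar>y\<bar> + \<bar>u\<bar>))"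
    unfolding abs_mult using linear assms by (intro mult_mono) auto
  also have "\<dots> = M\<^sup>2 * (y\<^sup>2 + u\<^sup>2 + 2 * \<bar>y * u\<bar>)"
    by (simp add: power2_eq_square algebra_simps abs_mult)
  also have "\<dots> \<le> M\<^sup>2 * (2 * (y\<^sup>2 + u\<^sup>2))"
    using abs_mult_le_half_sum_squares[of y u] by (intro mult_left_mono) auto
  finally show ?thesis by (simp add: algebra_simps)
qed

section \<open>The slow system\<close>

lemma sum_squares_change_of_variables:
  fixes v u y P B \<mu> :: real
  assumes "u = v / \<mu> + P * y" and "\<bar>P\<bar> \<le> B" and "\<mu> > 0"
  shows "y\<^sup>2 + v\<^sup>2 \<le> (1 + 2 * \<mu>\<^sup>2 + 2 * \<mu>\<^sup>2 * B\<^sup>2) * (y\<^sup>2 + u\<^sup>2)"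
    and "y\<^sup>2 + u\<^sup>2 \<le> (1 + 2 * B\<^sup>2 + 2 / \<mu>\<^sup>2) * (y\<^sup>2 + v\<^sup>2)"
proof -
  have sum_sq: "(a + b)\<^sup>2 \<le> 2 * a\<^sup>2 + 2 * b\<^sup>2" for a b :: real
    using zero_le_power2[of "a - b"] by (simp add: power2_eq_square algebra_simps)
  have P: "(P * x)\<^sup>2 \<le> B\<^sup>2 * x\<^sup>2" for x
  proof -
    have "P\<^sup>2 \<le> B\<^sup>2" using assms(2) by (metis abs_ge_self abs_le_square_iff order_trans)
    then show ?thesis by (simp add: power_mult_distrib mult_right_mono)
  qed
  have "v = \<mu> * u + \<mu> * (- P * y)" using assms(1,3) by (simp add: field_simps)
  then have "v\<^sup>2 \<le> 2 * (\<mu>\<^sup>2 * u\<^sup>2) + 2 * (\<mu>\<^sup>2 * (B\<^sup>2 * y\<^sup>2))"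
    using sum_sq[of "\<mu> * u" "\<mu> * (- P * y)"] P[of y]
      mult_left_mono[OF P[of y], of "\<mu>\<^sup>2"] by (simp add: power_mult_distrib)
  moreover have "(1 + 2 * \<mu>\<^sup>2 + 2 * \<mu>\<^sup>2 * B\<^sup>2) * (y\<^sup>2 + u\<^sup>2)
      = y\<^sup>2 + (u\<^sup>2 + 2 * (\<mu>\<^sup>2 * y\<^sup>2) + 2 * (\<mu>\<^sup>2 * (B\<^sup>2 * u\<^sup>2)))
        + (2 * (\<mu>\<^sup>2 * u\<^sup>2) + 2 * (\<mu>\<^sup>2 * (B\<^sup>2 * y\<^sup>2)))"
    by (simp add: algebra_simps)
  moreover have "0 \<le> u\<^sup>2 + 2 * (\<mu>\<^sup>2 * y\<^sup>2) + 2 * (\<mu>\<^sup>2 * (B\<^sup>2 * u\<^sup>2))" by simp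
  ultimately show "y\<^sup>2 + v\<^sup>2 \<le> (1 + 2 * \<mu>\<^sup>2 + 2 * \<mu>\<^sup>2 * B\<^sup>2) * (y\<^sup>2 + u\<^sup>2)"
    by linarith
  have "u\<^sup>2 \<le> 2 * (v\<^sup>2 / \<mu>\<^sup>2) + 2 * (B\<^sup>2 * y\<^sup>2)"
    using assms(1) sum_sq[of "v / \<mu>" "P * y"] P[of y] by (simp add: power_divide)
  moreover have "(1 + 2 * B\<^sup>2 + 2 / \<mu>\<^sup>2) * (y\<^sup>2 + v\<^sup>2)
      = y\<^sup>2 + (v\<^sup>2 + 2 * (B\<^sup>2 * v\<^sup>2) + 2 * (y\<^sup>2 / \<mu>\<^sup>2)) + (2 * (v\<^sup>2 / \<mu>\<^sup>2) + 2 * (B\<^sup>2 * y\<^sup>2))"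
    by (simp add: algebra_simps)
  moreover have "0 \<le> v\<^sup>2 + 2 * (B\<^sup>2 * v\<^sup>2) + 2 * (y\<^sup>2 / \<mu>\<^sup>2)" by simp
  ultimately show "y\<^sup>2 + u\<^sup>2 \<le> (1 + 2 * B\<^sup>2 + 2 / \<mu>\<^sup>2) * (y\<^sup>2 + v\<^sup>2)"
    by linarith
qed

lemma lin2_solution_slow_variables:
  fixes y v \<phi> \<Psi> :: "real \<Rightarrow> real"
  assumes sol: "lin2_solution (\<alpha> * \<mu>) (\<lambda>t. \<beta> * \<mu>\<^sup>2 + \<mu> * \<phi> t) t0 y v"
    and \<Psi>': "\<And>x. (\<Psi> has_real_derivative \<phi> x) (at x)" and "\<mu> > 0"
    and u: "u = (\<lambda>t. v t / \<mu> + \<Psi> t * y t)" and "x \<ge> t0"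
  shows "(y has_real_derivative \<mu> * (u x - \<Psi> x * y x)) (at x within {t0..})"
    and "(u has_real_derivative \<mu> * ((\<Psi> x - \<alpha>) * u x + (\<alpha> * \<Psi> x - \<beta> - (\<Psi> x)\<^sup>2) * y x))
           (at x within {t0..})"
proof -
  have y': "(y has_real_derivative v x) (at x within {t0..})"
    and v': "(v has_real_derivative - (\<alpha> * \<mu>) * v x - (\<beta> * \<mu>\<^sup>2 + \<mu> * \<phi> x) * y x) (at x within {t0..})"
    using sol \<open>x \<ge> t0\<close> unfolding lin2_solution_def by auto
  show "(y has_real_derivative \<mu> * (u x - \<Psi> x * y x)) (at x within {t0..})"
    using y' \<open>\<mu> > 0\<close> by (simp add: u)
  have "(u has_real_derivative (- (\<alpha> * \<mu>) * v x - (\<beta> * \<mu>\<^sup>2 + \<mu> * \<phi> x) * y x) / \<mu>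
          + (\<phi> x * y x + \<Psi> x * v x)) (at x within {t0..})"
    unfolding u using \<Psi>'[THEN has_field_derivative_at_within] \<open>\<mu> > 0\<close>
    by (auto intro!: derivative_eq_intros y' v')
  then show "(u has_real_derivative \<mu> * ((\<Psi> x - \<alpha>) * u x + (\<alpha> * \<Psi> x - \<beta> - (\<Psi> x)\<^sup>2) * y x))
      (at x within {t0..})"
    using \<open>\<mu> > 0\<close> by (simp add: u field_simps power2_eq_square)
qed

text \<open>The derivatives prescribed for \<open>Q11\<close>, \<open>Q12\<close>, \<open>Q22\<close> are the zero-mean oscillating
  coefficients in the derivative of \<open>k y\<^sup>2 + c y u + u\<^sup>2\<close> along the slow system, so adding
  \<open>\<mu>\<close> times their quadratic form leaves only the averaged dissipation and an \<open>O(\<mu>\<^sup>2)\<close> term.\<close>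

lemma slow_lyapunov_has_derivative:
  fixes y u \<Psi> Q11 Q12 Q22 :: "real \<Rightarrow> real"
  assumes "(y has_real_derivative \<mu> * (u x - \<Psi> x * y x)) (at x within S)"
    and "(u has_real_derivative \<mu> * ((\<Psi> x - \<alpha>) * u x + (\<alpha> * \<Psi> x - \<beta> - (\<Psi> x)\<^sup>2) * y x)) (at x within S)"
    and "(Q11 has_real_derivative (2 * k - c * \<alpha>) * \<Psi> x + c * ((\<Psi> x)\<^sup>2 - s)) (at x within S)"
    and "(Q12 has_real_derivative (\<Psi> x)\<^sup>2 - s - \<alpha> * \<Psi> x) (at x within S)"
    and "(Q22 has_real_derivative - 2 * \<Psi> x) (at x within S)"
    and "k = \<beta> + s"
  shows "((\<lambda>t. k * (y t)\<^sup>2 + c * y t * u t + (u t)\<^sup>2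
             + \<mu> * (Q11 t * (y t)\<^sup>2 + 2 * Q12 t * y t * u t + Q22 t * (u t)\<^sup>2)) has_real_derivative
           - \<mu> * (c * k * (y x)\<^sup>2 + c * \<alpha> * y x * u x + (2 * \<alpha> - c) * (u x)\<^sup>2)
           + \<mu>\<^sup>2 * (2 * (u x - \<Psi> x * y x) * (Q11 x * y x + Q12 x * u x)
             + 2 * ((\<alpha> * \<Psi> x - \<beta> - (\<Psi> x)\<^sup>2) * y x + (\<Psi> x - \<alpha>) * u x) * (Q12 x * y x + Q22 x * u x)))
         (at x within S)"
  using assms by (auto intro!: derivative_eq_intros simp: algebra_simps power2_eq_square)

locale slow_averaging =
  fixes \<alpha> \<beta> s k c \<epsilon> p P M \<mu> :: real and \<phi> \<Psi> Q11 Q12 Q22 :: "real \<Rightarrow> real"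
  assumes \<Psi>': "\<And>x. (\<Psi> has_real_derivative \<phi> x) (at x)"
    and Q11': "\<And>x. (Q11 has_real_derivative (2 * k - c * \<alpha>) * \<Psi> x + c * ((\<Psi> x)\<^sup>2 - s)) (at x)"
    and Q12': "\<And>x. (Q12 has_real_derivative (\<Psi> x)\<^sup>2 - s - \<alpha> * \<Psi> x) (at x)"
    and Q22': "\<And>x. (Q22 has_real_derivative - 2 * \<Psi> x) (at x)"
    and k_def: "k = \<beta> + s"
    and \<mu>_pos: "\<mu> > 0"
    and bounded: "\<And>t. \<bar>Q11 t\<bar> \<le> M" "\<And>t. \<bar>Q12 t\<bar> \<le> M" "\<And>t. \<bar>Q22 t\<bar> \<le> M"
      "\<And>t. \<bar>\<Psi> t\<bar> \<le> M" "\<And>t. \<bar>\<alpha> * \<Psi> t - \<beta> - (\<Psi> t)\<^sup>2\<bar> \<le> M" "\<And>t. \<bar>\<Psi> t - \<alpha>\<bar> \<le> M"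
      "1 \<le> M"
    and dissipative: "\<epsilon> > 0"
      "\<And>y u. \<epsilon> * (y\<^sup>2 + u\<^sup>2) \<le> c * k * y\<^sup>2 + c * \<alpha> * y * u + (2 * \<alpha> - c) * u\<^sup>2"
    and definite: "p > 0" "\<And>y u. p * (y\<^sup>2 + u\<^sup>2) \<le> k * y\<^sup>2 + c * y * u + u\<^sup>2"
      "\<And>y u. k * y\<^sup>2 + c * y * u + u\<^sup>2 \<le> P * (y\<^sup>2 + u\<^sup>2)"
    and small: "\<mu> * (8 * M\<^sup>2) \<le> \<epsilon> / 2" "\<mu> * (2 * M) \<le> p / 2"
begin

lemma slow_exp_decay:
  fixes y u :: "real \<Rightarrow> real"
  assumes y': "\<And>x. x \<ge> t0 \<Longrightarrow> (y has_real_derivative \<mu> * (u x - \<Psi> x * y x)) (at x within {t0..})"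
    and u': "\<And>x. x \<ge> t0 \<Longrightarrow>
      (u has_real_derivative \<mu> * ((\<Psi> x - \<alpha>) * u x + (\<alpha> * \<Psi> x - \<beta> - (\<Psi> x)\<^sup>2) * y x)) (at x within {t0..})"
    and "t \<ge> t0"
  shows "(y t)\<^sup>2 + (u t)\<^sup>2
    \<le> ((P + p / 2) / (p / 2)) * ((y t0)\<^sup>2 + (u t0)\<^sup>2) * exp (- (\<mu> * (\<epsilon> / 2) / (P + p / 2)) * (t - t0))"
proof -
  define N where "N x = (y x)\<^sup>2 + (u x)\<^sup>2" for x
  define W where "W x = Q11 x * (y x)\<^sup>2 + 2 * Q12 x * y x * u x + Q22 x * (u x)\<^sup>2" for x
  define V where "V x = k * (y x)\<^sup>2 + c * y x * u x + (u x)\<^sup>2 + \<mu> * W x" for x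
  define R where "R x = 2 * (u x - \<Psi> x * y x) * (Q11 x * y x + Q12 x * u x)
    + 2 * ((\<alpha> * \<Psi> x - \<beta> - (\<Psi> x)\<^sup>2) * y x + (\<Psi> x - \<alpha>) * u x) * (Q12 x * y x + Q22 x * u x)" for x
  define V' where "V' x = - \<mu> * (c * k * (y x)\<^sup>2 + c * \<alpha> * y x * u x + (2 * \<alpha> - c) * (u x)\<^sup>2)
    + \<mu>\<^sup>2 * R x" for x
  have V_deriv: "(V has_real_derivative V' x) (at x within {t0..})" if "x \<ge> t0" for x
    unfolding V_def W_def V'_def R_def
    using y'[OF that] u'[OF that] Q11'[THEN has_field_derivative_at_within]
      Q12'[THEN has_field_derivative_at_within] Q22'[THEN has_field_derivative_at_within] k_def
    by (rule slow_lyapunov_has_derivative)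
  have correction: "\<bar>\<mu> * W x\<bar> \<le> (p / 2) * N x" for x
  proof -
    have "\<bar>\<mu> * W x\<bar> = \<mu> * \<bar>W x\<bar>" using \<mu>_pos by (simp add: abs_mult)
    also have "\<dots> \<le> \<mu> * (2 * M * N x)"
      unfolding W_def N_def using abs_quadratic_form_le[OF bounded(1-3)] \<mu>_pos
      by (intro mult_left_mono) auto
    also have "\<dots> \<le> (p / 2) * N x"
      using mult_right_mono[OF small(2), of "N x"] by (simp add: N_def mult.assoc)
    finally show ?thesis .
  qed
  have V_bounds: "(p / 2) * N x \<le> V x" "V x \<le> (P + p / 2) * N x" for x
  proof -
    have "p * N x \<le> k * (y x)\<^sup>2 + c * y x * u x + (u x)\<^sup>2"
      "k * (y x)\<^sup>2 + c * y x * u x + (u x)\<^sup>2 \<le> P * N x"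
      unfolding N_def using definite(2,3) by auto
    then show "(p / 2) * N x \<le> V x" "V x \<le> (P + p / 2) * N x"
      using correction[of x] unfolding V_def distrib_right abs_le_iff by linarith+
  qed
  have R_bound: "\<bar>R x\<bar> \<le> 8 * M\<^sup>2 * N x" for x
  proof -
    define X1 where "X1 = (u x - \<Psi> x * y x) * (Q11 x * y x + Q12 x * u x)"
    define X2 where "X2 = ((\<alpha> * \<Psi> x - \<beta> - (\<Psi> x)\<^sup>2) * y x + (\<Psi> x - \<alpha>) * u x) * (Q12 x * y x + Q22 x * u x)"
    have "u x - \<Psi> x * y x = (- \<Psi> x) * y x + 1 * u x" by simp
    then have "\<bar>X1\<bar> \<le> 2 * M\<^sup>2 * N x"
      unfolding X1_def N_def using bounded
      by (metis abs_minus_cancel abs_one abs_product_linear_forms_le)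
    moreover have "\<bar>X2\<bar> \<le> 2 * M\<^sup>2 * N x"
      unfolding X2_def N_def by (rule abs_product_linear_forms_le[OF bounded(5,6,2,3)])
    moreover have "R x = 2 * X1 + 2 * X2" unfolding R_def X1_def X2_def by (simp only: mult.assoc)
    ultimately show ?thesis by (simp add: abs_le_iff)
  qed
  have V'_bound: "V' x \<le> - (\<mu> * (\<epsilon> / 2)) * N x" for x
  proof -
    have "\<mu> * (\<epsilon> * N x) \<le> \<mu> * (c * k * (y x)\<^sup>2 + c * \<alpha> * y x * u x + (2 * \<alpha> - c) * (u x)\<^sup>2)"
      unfolding N_def using dissipative(2) \<mu>_pos by (intro mult_left_mono) auto
    moreover have "\<mu>\<^sup>2 * R x \<le> \<mu> * ((\<epsilon> / 2) * N x)"
    proof -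
      have "\<mu>\<^sup>2 * R x \<le> \<mu>\<^sup>2 * (8 * M\<^sup>2 * N x)"
        using R_bound[of x] by (intro mult_left_mono) auto
      also have "\<dots> = \<mu> * ((\<mu> * (8 * M\<^sup>2)) * N x)" by (simp add: power2_eq_square)
      also have "\<dots> \<le> \<mu> * ((\<epsilon> / 2) * N x)"
        using small(1) \<mu>_pos by (intro mult_left_mono mult_right_mono) (auto simp: N_def)
      finally show ?thesis .
    qed
    ultimately show ?thesis unfolding V'_def by (simp add: algebra_simps)
  qed
  have "p \<le> P" using definite(2,3)[of 1 0] by simp
  then have "N t \<le> ((P + p / 2) / (p / 2)) * N t0 * exp (- (\<mu> * (\<epsilon> / 2) / (P + p / 2)) * (t - t0))"
    using V_deriv V'_bound V_bounds definite(1) dissipative(1) \<mu>_pos \<open>t \<ge> t0\<close>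
    by (intro exp_decay_of_lyapunov[of t0 V V']) auto
  then show ?thesis unfolding N_def .
qed

lemma lin2_solution_exp_bound:
  obtains K \<gamma> where "K > 0" and "\<gamma> > 0"
    and "\<And>t0 y v t. lin2_solution (\<alpha> * \<mu>) (\<lambda>t. \<beta> * \<mu>\<^sup>2 + \<mu> * \<phi> t) t0 y v \<Longrightarrow> t \<ge> t0 \<Longrightarrow>
      (y t)\<^sup>2 + (v t)\<^sup>2 \<le> K * ((y t0)\<^sup>2 + (v t0)\<^sup>2) * exp (- \<gamma> * (t - t0))"
proof
  define C where "C = (P + p / 2) / (p / 2)"
  define \<gamma> where "\<gamma> = \<mu> * (\<epsilon> / 2) / (P + p / 2)"
  define K1 where "K1 = 1 + 2 * \<mu>\<^sup>2 + 2 * \<mu>\<^sup>2 * M\<^sup>2"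
  define K2 where "K2 = 1 + 2 * M\<^sup>2 + 2 / \<mu>\<^sup>2"
  have "p \<le> P" using definite(2,3)[of 1 0] by simp
  then have "C > 0" "\<gamma> > 0"
    unfolding C_def \<gamma>_def using definite(1) dissipative(1) \<mu>_pos by simp_all
  moreover have "K1 > 0" "K2 > 0" unfolding K1_def K2_def by (simp_all add: add_pos_nonneg)
  ultimately show "K1 * C * K2 > 0" "\<gamma> > 0" by simp_all
  fix t0 y v t
  assume sol: "lin2_solution (\<alpha> * \<mu>) (\<lambda>t. \<beta> * \<mu>\<^sup>2 + \<mu> * \<phi> t) t0 y v" and "t \<ge> t0"
  define u where "u = (\<lambda>t. v t / \<mu> + \<Psi> t * y t)"
  have "(y t)\<^sup>2 + (u t)\<^sup>2 \<le> C * ((y t0)\<^sup>2 + (u t0)\<^sup>2) * exp (- \<gamma> * (t - t0))"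
    unfolding C_def \<gamma>_def
    using lin2_solution_slow_variables[OF sol \<Psi>' \<mu>_pos u_def] \<open>t \<ge> t0\<close> by (intro slow_exp_decay) auto
  moreover have "(y t)\<^sup>2 + (v t)\<^sup>2 \<le> K1 * ((y t)\<^sup>2 + (u t)\<^sup>2)"
    and "(y t0)\<^sup>2 + (u t0)\<^sup>2 \<le> K2 * ((y t0)\<^sup>2 + (v t0)\<^sup>2)"
    unfolding K1_def K2_def using sum_squares_change_of_variables bounded(4) \<mu>_pos by (simp_all add: u_def)
  ultimately have "(y t)\<^sup>2 + (v t)\<^sup>2 \<le> K1 * (C * (K2 * ((y t0)\<^sup>2 + (v t0)\<^sup>2)) * exp (- \<gamma> * (t - t0)))"
    using \<open>K1 > 0\<close> \<open>C > 0\<close> by (meson order_trans less_imp_le mult_left_mono mult_right_mono exp_ge_zero)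
  then show "(y t)\<^sup>2 + (v t)\<^sup>2 \<le> K1 * C * K2 * ((y t0)\<^sup>2 + (v t0)\<^sup>2) * exp (- \<gamma> * (t - t0))"
    by (simp add: mult_ac)
qed

lemma zero_asympt_stable: "zero_asympt_stable (\<alpha> * \<mu>) (\<lambda>t. \<beta> * \<mu>\<^sup>2 + \<mu> * \<phi> t)"
  by (rule lin2_solution_exp_bound) (rule zero_asympt_stable_of_exp_bound)

end

section \<open>Averaging\<close>

lemma averaged_lyapunov_forms:
  fixes \<alpha> k :: real
  assumes "\<alpha> > 0" and "k > 0"
  obtains \<epsilon> c p P where "\<epsilon> > 0"
    and "\<And>y u. \<epsilon> * (y\<^sup>2 + u\<^sup>2) \<le> c * k * y\<^sup>2 + c * \<alpha> * y * u + (2 * \<alpha> - c) * u\<^sup>2"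
    and "p > 0" and "\<And>y u. p * (y\<^sup>2 + u\<^sup>2) \<le> k * y\<^sup>2 + c * y * u + u\<^sup>2"
    and "\<And>y u. k * y\<^sup>2 + c * y * u + u\<^sup>2 \<le> P * (y\<^sup>2 + u\<^sup>2)"
proof -
  \<comment> \<open>any \<open>c\<close> with \<open>0 < c < \<alpha>\<close> and \<open>c \<alpha> \<le> k\<close> makes both forms definite\<close>
  define c where "c = \<alpha> * k / (k + \<alpha>\<^sup>2)"
  have "k + \<alpha>\<^sup>2 > 0" using assms by (simp add: add_pos_nonneg)
  then have "c > 0" "c < \<alpha>" "c * \<alpha> \<le> k"
    unfolding c_def using assms by (simp_all add: field_simps power2_eq_square)
  have "(c * \<alpha>)\<^sup>2 < 4 * (c * k) * (2 * \<alpha> - c)"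
  proof -
    have "(c * \<alpha>)\<^sup>2 \<le> (c * k) * \<alpha>"
      using \<open>c * \<alpha> \<le> k\<close> \<open>c > 0\<close> assms(1) by (simp add: power2_eq_square mult_left_mono mult.assoc)
    also have "\<dots> < 4 * (c * k) * (2 * \<alpha> - c)"
      using \<open>c > 0\<close> \<open>c < \<alpha>\<close> assms by (simp add: mult_strict_left_mono)
    finally show ?thesis .
  qed
  then obtain \<epsilon> where "\<epsilon> > 0"
    and "\<And>y u. \<epsilon> * (y\<^sup>2 + u\<^sup>2) \<le> c * k * y\<^sup>2 + c * \<alpha> * y * u + (2 * \<alpha> - c) * u\<^sup>2"
    using quadratic_form_coercive[of "c * k" "2 * \<alpha> - c" "c * \<alpha>"] \<open>c > 0\<close> \<open>c < \<alpha>\<close> assms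
    by (auto simp: mult.assoc)
  moreover have "c\<^sup>2 < 4 * k * 1"
    using \<open>c > 0\<close> \<open>c < \<alpha>\<close> \<open>c * \<alpha> \<le> k\<close> assms(2)
    by (simp add: power2_eq_square) (smt (verit) mult_strict_left_mono)
  then obtain p where "p > 0" and "\<And>y u. p * (y\<^sup>2 + u\<^sup>2) \<le> k * y\<^sup>2 + c * y * u + u\<^sup>2"
    using quadratic_form_coercive[of k 1 c] assms(2) by auto
  moreover have "k * y\<^sup>2 + c * y * u + u\<^sup>2 \<le> (2 * (k + c + 1)) * (y\<^sup>2 + u\<^sup>2)" for y u
    using abs_quadratic_form_le[of k "k + c + 1" "c / 2" 1 y u] \<open>c > 0\<close> assms(2) by simp
  ultimately show thesis using that by blast
qed

lemma centered_primitive_integrals: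
  fixes \<phi> \<Phi> :: "real \<Rightarrow> real"
  assumes "T > 0" and "continuous_on UNIV \<phi>" and \<Phi>': "\<And>x. (\<Phi> has_real_derivative \<phi> x) (at x)"
    and "\<Phi> 0 = 0" and "\<Phi> T = 0"
  defines "m \<equiv> integral {0..T} \<Phi> / T"
  shows "integral {0..T} (\<lambda>t. \<Phi> t - m) = 0"
    and "integral {0..T} (\<lambda>t. (\<Phi> t - m)\<^sup>2) / T
      = (1 / T) * integral {0..T} (\<lambda>\<tau>. (integral {0..\<tau>} \<phi>)\<^sup>2) - ((1 / T) * integral {0..T} (\<lambda>\<tau>. \<tau> * \<phi> \<tau>))\<^sup>2"
proof -
  have "continuous_on UNIV \<Phi>" using \<Phi>' by (metis DERIV_isCont continuous_at_imp_continuous_on)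
  have integrable: "f integrable_on {0..T}" if "continuous_on UNIV f" for f :: "real \<Rightarrow> real"
    using continuous_on_subset[OF that] by (intro integrable_continuous_interval) simp
  have [simp]: "\<Phi> integrable_on {0..T}" "(\<lambda>t. (\<Phi> t)\<^sup>2) integrable_on {0..T}"
    "(\<lambda>t. t * \<phi> t) integrable_on {0..T}"
    using \<open>continuous_on UNIV \<Phi>\<close> assms(2) by (auto intro!: integrable continuous_intros)
  define I1 where "I1 = integral {0..T} \<Phi>"
  define I2 where "I2 = integral {0..T} (\<lambda>t. (\<Phi> t)\<^sup>2)"
  show "integral {0..T} (\<lambda>t. \<Phi> t - m) = 0"
    using assms(1) by (subst integral_diff) (auto simp: m_def)
  have "integral {0..\<tau>} \<phi> = \<Phi> \<tau>" if "\<tau> \<ge> 0" for \<tau>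
    using has_integral_of_has_real_derivative[OF that \<Phi>'] assms(4) by (simp add: integral_unique)
  then have primitive: "integral {0..T} (\<lambda>\<tau>. (integral {0..\<tau>} \<phi>)\<^sup>2) = I2"
    unfolding I2_def by (intro integral_cong) simp
  \<comment> \<open>integration by parts, using \<open>\<Phi> T = 0\<close>\<close>
  have "((\<lambda>t. \<Phi> t + t * \<phi> t) has_integral T * \<Phi> T - 0 * \<Phi> 0) {0..T}"
    using assms(1) by (intro has_integral_of_has_real_derivative) (auto intro!: derivative_eq_intros \<Phi>')
  then have by_parts: "integral {0..T} (\<lambda>\<tau>. \<tau> * \<phi> \<tau>) = - I1"
    using assms(5) integral_add[of \<Phi> "{0..T}" "\<lambda>t. t * \<phi> t"] by (simp add: integral_unique I1_def)
  have "((\<lambda>t. (\<Phi> t)\<^sup>2 - 2 * m * \<Phi> t + m\<^sup>2) has_integral I2 - 2 * m * I1 + T * m\<^sup>2) {0..T}"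
    unfolding I1_def I2_def using assms(1) has_integral_const_real[of "m\<^sup>2" 0 T]
    by (intro has_integral_add has_integral_diff has_integral_mult_right integrable_integral) auto
  moreover have "(\<lambda>t. (\<Phi> t - m)\<^sup>2) = (\<lambda>t. (\<Phi> t)\<^sup>2 - 2 * m * \<Phi> t + m\<^sup>2)"
    by (simp add: fun_eq_iff power2_diff algebra_simps)
  ultimately have "integral {0..T} (\<lambda>t. (\<Phi> t - m)\<^sup>2) = I2 - 2 * m * I1 + T * m\<^sup>2"
    by (simp add: integral_unique)
  then show "integral {0..T} (\<lambda>t. (\<Phi> t - m)\<^sup>2) / T
      = (1 / T) * integral {0..T} (\<lambda>\<tau>. (integral {0..\<tau>} \<phi>)\<^sup>2) - ((1 / T) * integral {0..T} (\<lambda>\<tau>. \<tau> * \<phi> \<tau>))\<^sup>2"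
    using assms(1) unfolding primitive by_parts m_def I1_def[symmetric] by (simp add: field_simps power2_eq_square)
qed

lemma periodic_correction_coefficients:
  fixes \<Psi> :: "real \<Rightarrow> real" and \<alpha> \<beta> k c s :: real
  assumes "T > 0" and "continuous_on UNIV \<Psi>" and \<Psi>_periodic: "\<forall>t. \<Psi> (t + T) = \<Psi> t"
    and "integral {0..T} \<Psi> = 0" and s_def: "s = integral {0..T} (\<lambda>t. (\<Psi> t)\<^sup>2) / T"
  obtains Q11 Q12 Q22 M
  where "\<And>x. (Q11 has_real_derivative (2 * k - c * \<alpha>) * \<Psi> x + c * ((\<Psi> x)\<^sup>2 - s)) (at x)"
    and "\<And>x. (Q12 has_real_derivative (\<Psi> x)\<^sup>2 - s - \<alpha> * \<Psi> x) (at x)"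
    and "\<And>x. (Q22 has_real_derivative - 2 * \<Psi> x) (at x)"
    and "\<And>t. \<bar>Q11 t\<bar> \<le> M" "\<And>t. \<bar>Q12 t\<bar> \<le> M" "\<And>t. \<bar>Q22 t\<bar> \<le> M"
      "\<And>t. \<bar>\<Psi> t\<bar> \<le> M" "\<And>t. \<bar>\<alpha> * \<Psi> t - \<beta> - (\<Psi> t)\<^sup>2\<bar> \<le> M" "\<And>t. \<bar>\<Psi> t - \<alpha>\<bar> \<le> M"
      "1 \<le> M"
proof -
  obtain G1 where G1': "\<And>x. (G1 has_real_derivative \<Psi> x) (at x)" and "\<forall>t. G1 (t + T) = G1 t"
    using periodic_antiderivative[OF assms(1-4)] by blast
  have "(\<lambda>t. (\<Psi> t)\<^sup>2) integrable_on {0..T}"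
    using continuous_on_subset[OF \<open>continuous_on UNIV \<Psi>\<close>, of "{0..T}"]
    by (intro integrable_continuous_interval continuous_intros) simp
  then have "integral {0..T} (\<lambda>t. (\<Psi> t)\<^sup>2 - s) = 0"
    using \<open>T > 0\<close> by (subst integral_diff) (auto simp: s_def)
  moreover have "continuous_on UNIV (\<lambda>t. (\<Psi> t)\<^sup>2 - s)"
    using \<open>continuous_on UNIV \<Psi>\<close> by (intro continuous_intros)
  moreover have "\<forall>t. (\<Psi> (t + T))\<^sup>2 - s = (\<Psi> t)\<^sup>2 - s" using \<Psi>_periodic by simp
  ultimately obtain G2 where G2': "\<And>x. (G2 has_real_derivative (\<Psi> x)\<^sup>2 - s) (at x)"
    and "\<forall>t. G2 (t + T) = G2 t"
    using periodic_antiderivative[OF \<open>T > 0\<close>, of "\<lambda>t. (\<Psi> t)\<^sup>2 - s"] by blast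
  define Q11 where "Q11 t = (2 * k - c * \<alpha>) * G1 t + c * G2 t" for t
  define Q12 where "Q12 t = G2 t - \<alpha> * G1 t" for t
  define Q22 where "Q22 t = - 2 * G1 t" for t
  have Q11': "(Q11 has_real_derivative (2 * k - c * \<alpha>) * \<Psi> x + c * ((\<Psi> x)\<^sup>2 - s)) (at x)"
    and Q12': "(Q12 has_real_derivative (\<Psi> x)\<^sup>2 - s - \<alpha> * \<Psi> x) (at x)"
    and Q22': "(Q22 has_real_derivative - 2 * \<Psi> x) (at x)" for x
    unfolding Q11_def Q12_def Q22_def by (auto intro!: derivative_eq_intros G1' G2')
  define h where "h t = \<bar>Q11 t\<bar> + \<bar>Q12 t\<bar> + \<bar>Q22 t\<bar> + \<bar>\<Psi> t\<bar> + \<bar>\<alpha> * \<Psi> t - \<beta> - (\<Psi> t)\<^sup>2\<bar> + \<bar>\<Psi> t - \<alpha>\<bar>"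
    for t
  have h_continuous: "continuous_on UNIV h"
    unfolding h_def using Q11' Q12' Q22' \<open>continuous_on UNIV \<Psi>\<close>
    by (intro continuous_intros) (metis DERIV_isCont continuous_at_imp_continuous_on)+
  have h_periodic: "\<forall>t. h (t + T) = h t"
    unfolding h_def Q11_def Q12_def Q22_def
    using \<Psi>_periodic \<open>\<forall>t. G1 (t + T) = G1 t\<close> \<open>\<forall>t. G2 (t + T) = G2 t\<close> by simp
  obtain M0 where "\<And>t. \<bar>h t\<bar> \<le> M0"
    using continuous_periodic_bounded[OF \<open>T > 0\<close> h_continuous h_periodic] by blast
  then have h_le: "h t \<le> M0" for t
    using abs_ge_self order_trans by blast
  have "\<bar>Q11 t\<bar> \<le> M0 + 1" "\<bar>Q12 t\<bar> \<le> M0 + 1" "\<bar>Q22 t\<bar> \<le> M0 + 1" "\<bar>\<Psi> t\<bar> \<le> M0 + 1"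
    "\<bar>\<alpha> * \<Psi> t - \<beta> - (\<Psi> t)\<^sup>2\<bar> \<le> M0 + 1" "\<bar>\<Psi> t - \<alpha>\<bar> \<le> M0 + 1" "1 \<le> M0 + 1" for t
    using h_le[of t] unfolding h_def by (smt (verit) abs_ge_zero)+
  then show thesis by (rule that[OF Q11' Q12' Q22'])
qed

lemma zero_asympt_stable_for_small_mu:
  fixes \<phi> \<Psi> :: "real \<Rightarrow> real"
  assumes "T > 0" and "\<alpha> > 0"
    and \<Psi>': "\<And>x. (\<Psi> has_real_derivative \<phi> x) (at x)"
    and "\<forall>t. \<Psi> (t + T) = \<Psi> t" and "integral {0..T} \<Psi> = 0"
    and "\<beta> + integral {0..T} (\<lambda>t. (\<Psi> t)\<^sup>2) / T > 0"
  shows "\<exists>\<mu>0>0. \<forall>\<mu>. 0 < \<mu> \<and> \<mu> \<le> \<mu>0 \<longrightarrow> zero_asympt_stable (\<alpha> * \<mu>) (\<lambda>t. \<beta> * \<mu>\<^sup>2 + \<mu> * \<phi> t)"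
proof -
  define s where "s = integral {0..T} (\<lambda>t. (\<Psi> t)\<^sup>2) / T"
  define k where "k = \<beta> + s"
  have "k > 0" using assms(6) unfolding k_def s_def .
  obtain \<epsilon> c p P where dissipative: "\<epsilon> > 0"
      "\<And>y u. \<epsilon> * (y\<^sup>2 + u\<^sup>2) \<le> c * k * y\<^sup>2 + c * \<alpha> * y * u + (2 * \<alpha> - c) * u\<^sup>2"
    and definite: "p > 0" "\<And>y u. p * (y\<^sup>2 + u\<^sup>2) \<le> k * y\<^sup>2 + c * y * u + u\<^sup>2"
      "\<And>y u. k * y\<^sup>2 + c * y * u + u\<^sup>2 \<le> P * (y\<^sup>2 + u\<^sup>2)"
    using averaged_lyapunov_forms[OF \<open>\<alpha> > 0\<close> \<open>k > 0\<close>] by blast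
  have "continuous_on UNIV \<Psi>" using \<Psi>' by (metis DERIV_isCont continuous_at_imp_continuous_on)
  then obtain Q11 Q12 Q22 M
    where Q': "\<And>x. (Q11 has_real_derivative (2 * k - c * \<alpha>) * \<Psi> x + c * ((\<Psi> x)\<^sup>2 - s)) (at x)"
      "\<And>x. (Q12 has_real_derivative (\<Psi> x)\<^sup>2 - s - \<alpha> * \<Psi> x) (at x)"
      "\<And>x. (Q22 has_real_derivative - 2 * \<Psi> x) (at x)"
    and bounded: "\<And>t. \<bar>Q11 t\<bar> \<le> M" "\<And>t. \<bar>Q12 t\<bar> \<le> M" "\<And>t. \<bar>Q22 t\<bar> \<le> M"
      "\<And>t. \<bar>\<Psi> t\<bar> \<le> M" "\<And>t. \<bar>\<alpha> * \<Psi> t - \<beta> - (\<Psi> t)\<^sup>2\<bar> \<le> M" "\<And>t. \<bar>\<Psi> t - \<alpha>\<bar> \<le> M"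
      "1 \<le> M"
    using periodic_correction_coefficients[OF \<open>T > 0\<close> _ assms(4,5) s_def, where k = k and c = c and \<alpha> = \<alpha> and \<beta> = \<beta>]
    by blast
  define \<mu>0 where "\<mu>0 = min ((\<epsilon> / 2) / (8 * M\<^sup>2)) ((p / 2) / (2 * M))"
  have "\<mu>0 > 0" unfolding \<mu>0_def using dissipative(1) definite(1) bounded(7) by simp
  moreover have "zero_asympt_stable (\<alpha> * \<mu>) (\<lambda>t. \<beta> * \<mu>\<^sup>2 + \<mu> * \<phi> t)" if "0 < \<mu>" "\<mu> \<le> \<mu>0" for \<mu>
  proof -
    have "\<mu> * (8 * M\<^sup>2) \<le> \<epsilon> / 2" "\<mu> * (2 * M) \<le> p / 2"
      using that bounded(7) unfolding \<mu>0_def by (simp_all add: pos_le_divide_eq)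
    then interpret slow_averaging \<alpha> \<beta> s k c \<epsilon> p P M \<mu> \<phi> \<Psi> Q11 Q12 Q22
      using \<Psi>' Q' k_def \<open>0 < \<mu>\<close> bounded dissipative definite by unfold_locales auto
    show ?thesis by (rule zero_asympt_stable)
  qed
  ultimately show ?thesis by blast
qed

theorem mainTheorem1:
  fixes T \<alpha> \<beta> :: real and \<phi> :: "real \<Rightarrow> real"
  assumes "T > 0" and "\<alpha> > 0" and "\<beta> < 0"
    and "continuous_on UNIV \<phi>"
    and "\<forall>t. \<phi> (t + T) = \<phi> t"
    and "integral {0..T} \<phi> = 0"
    and "(1 / T) * integral {0..T} (\<lambda>\<tau>. (integral {0..\<tau>} \<phi>)\<^sup>2)
           > ((1 / T) * integral {0..T} (\<lambda>\<tau>. \<tau> * \<phi> \<tau>))\<^sup>2 - \<beta>"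
  shows "\<exists>\<mu>0>0. \<forall>\<mu>. 0 < \<mu> \<and> \<mu> \<le> \<mu>0 \<longrightarrow>
           zero_asympt_stable (\<alpha> * \<mu>) (\<lambda>t. \<beta> * \<mu>\<^sup>2 + \<mu> * \<phi> t)"
proof -
  obtain \<Phi> where \<Phi>': "\<And>x. (\<Phi> has_real_derivative \<phi> x) (at x)"
    and \<Phi>_periodic: "\<forall>t. \<Phi> (t + T) = \<Phi> t" and "\<Phi> 0 = 0"
    using periodic_antiderivative[OF assms(1,4,5,6)] by blast
  then have "\<Phi> T = 0" by (metis add_0)
  define \<Psi> where "\<Psi> t = \<Phi> t - integral {0..T} \<Phi> / T" for t
  note centered = centered_primitive_integrals[OF assms(1,4) \<Phi>' \<open>\<Phi> 0 = 0\<close> \<open>\<Phi> T = 0\<close>]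
  show ?thesis
  proof (rule zero_asympt_stable_for_small_mu[OF assms(1,2)])
    show "(\<Psi> has_real_derivative \<phi> x) (at x)" for x
      unfolding \<Psi>_def by (auto intro!: derivative_eq_intros \<Phi>')
    show "\<forall>t. \<Psi> (t + T) = \<Psi> t" unfolding \<Psi>_def using \<Phi>_periodic by simp
    show "integral {0..T} \<Psi> = 0" "\<beta> + integral {0..T} (\<lambda>t. (\<Psi> t)\<^sup>2) / T > 0"
      using centered assms(7) unfolding \<Psi>_def by auto
  qed
qed

end
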